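(* Let $\{c_n\}_{n\ge1}$ be a real sequence, $\{d_{n+1}\}_{n\ge1}$ a positive chain sequence, and let $P_0(x)=1$, $P_1(x)=x-c_1$, $P_{n+1}(x)=(x-c_{n+1})P_n(x)-d_{n+1}(x^2+1)P_{n-1}(x)$ for $n\ge1$. Then the zeros $x_j^{(n)}$, $j=1,\dots,n$, of $P_n$ are real and simple, and, ordering them so that $x_n^{(n)}<x_{n-1}^{(n)}<\dots<x_1^{(n)}$, they interlace: \[ x_{n+1}^{(n+1)}<x_n^{(n)}<x_n^{(n+1)}<\dots<x_2^{(n+1)}<x_1^{(n)}<x_1^{(n+1)},\qquad n\ge1 . \]
   Context: A sequence $\{d_{n+1}\}_{n\ge1}$ is a positive chain sequence if there is a sequence $\{g_{n+1}\}_{n\ge0}$ with $0\le g_1<1$, $0<g_n<1$ for $n\ge2$, and $d_{n+1}=(1-g_n)g_{n+1}$ for $n\ge1$. *)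

theory Defs
  imports "HOL-Computational_Algebra.Polynomial"
begin

text \<open>Positive chain sequence: d (n+1) for n \<ge> 1 is given by d :: nat \<Rightarrow> real
  (values d 0, d 1 irrelevant); parameter sequence g 1, g 2, ... given by g :: nat \<Rightarrow> real.\<close>
definition positive_chain_sequence :: "(nat \<Rightarrow> real) \<Rightarrow> bool" where
  "positive_chain_sequence d \<longleftrightarrow>
     (\<exists>g :: nat \<Rightarrow> real. 0 \<le> g 1 \<and> g 1 < 1 \<and> (\<forall>n\<ge>2. 0 < g n \<and> g n < 1) \<and>
        (\<forall>n\<ge>1. d (n + 1) = (1 - g n) * g (n + 1)))"

fun Pseq :: "(nat \<Rightarrow> real) \<Rightarrow> (nat \<Rightarrow> real) \<Rightarrow> nat \<Rightarrow> real poly" where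
  "Pseq c d 0 = 1"
| "Pseq c d (Suc 0) = [:- c 1, 1:]"
| "Pseq c d (Suc (Suc n)) =
     [:- c (n + 2), 1:] * Pseq c d (Suc n) - smult (d (n + 2)) [:1, 0, 1:] * Pseq c d n"

end

theory Submission
  imports Defs
begin

text \<open>If \<open>d\<close> is a positive chain sequence with parameters \<open>g\<close>, the leading coefficients
  \<open>L n\<close> of \<open>P n\<close> satisfy Wall's invariant \<open>L (n + 1) \<ge> (1 - g (n + 1)) L n > 0\<close>, so \<open>P n\<close>
  has degree exactly \<open>n\<close>. Interlacing then propagates by induction: if the zeros
  \<open>s 1 > \<dots> > s (n + 1)\<close> of \<open>P (n + 1)\<close> interlace those of \<open>P n\<close>, then
  \<open>P (n + 2) (s k) = - d (n + 2) (s k\<^sup>2 + 1) P n (s k)\<close> has sign \<open>(-1)\<^sup>k\<close>, and together with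
  the signs of \<open>P (n + 2)\<close> at \<open>\<plusminus>\<infinity>\<close> the intermediate value theorem puts one zero of
  \<open>P (n + 2)\<close> into each of the \<open>n + 2\<close> gaps of the \<open>s k\<close>. Numbering the zeros of every \<open>P n\<close>
  canonically, from the largest down, makes these local choices consistent across \<open>n\<close>.\<close>

definition decreasing_upto :: "nat \<Rightarrow> (nat \<Rightarrow> real) \<Rightarrow> bool" where
  "decreasing_upto n r \<longleftrightarrow> (\<forall>j. 1 \<le> j \<and> j < n \<longrightarrow> r (j + 1) < r j)"

definition interlacing :: "nat \<Rightarrow> (nat \<Rightarrow> real) \<Rightarrow> (nat \<Rightarrow> real) \<Rightarrow> bool" where
  "interlacing n r s \<longleftrightarrow> (\<forall>j. 1 \<le> j \<and> j \<le> n \<longrightarrow> s (j + 1) < r j \<and> r j < s j)"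

lemma decreasing_uptoD:
  assumes "decreasing_upto m r" "1 \<le> i" "i < j" "j \<le> m"
  shows "r j < r i"
proof -
  have "Suc i \<le> j" using assms(3) by simp
  then show ?thesis
  proof (induction j rule: dec_induct)
    case base
    then show ?case using assms unfolding decreasing_upto_def by auto
  next
    case (step k)
    then have "r (Suc k) < r k" using assms unfolding decreasing_upto_def by auto
    with step.IH show ?case by simp
  qed
qed

lemma decreasing_upto_inj_on:
  assumes "decreasing_upto m r"
  shows "inj_on r {1..m}"
proof (rule linorder_inj_onI')
  fix i j assume "i \<in> {1..m}" "j \<in> {1..m}" "i < j"
  then show "r i \<noteq> r j" using decreasing_uptoD[OF assms, of i j] by auto
qed

lemma interlacing_decreasing_upto:
  assumes "interlacing n r s"
  shows "decreasing_upto n r" "decreasing_upto (Suc n) s"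
proof -
  have sr: "s (j + 1) < r j" and rs: "r j < s j" if "1 \<le> j" "j \<le> n" for j
    using assms that unfolding interlacing_def by auto
  show "decreasing_upto n r"
    unfolding decreasing_upto_def
  proof (intro allI impI)
    fix j assume "1 \<le> j \<and> j < n"
    then show "r (j + 1) < r j" using rs[of "j + 1"] sr[of j] by simp
  qed
  show "decreasing_upto (Suc n) s"
    unfolding decreasing_upto_def
  proof (intro allI impI)
    fix j assume "1 \<le> j \<and> j < Suc n"
    then show "s (j + 1) < s j" using sr[of j] rs[of j] by simp
  qed
qed

lemma prod_sign_count_neg:
  fixes f :: "'a \<Rightarrow> real"
  assumes "finite A" "\<And>j. j \<in> A \<Longrightarrow> f j \<noteq> 0"
  shows "0 < (-1) ^ card {j \<in> A. f j < 0} * (\<Prod>j\<in>A. f j)"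
  using assms
proof (induction A rule: finite_induct)
  case (insert a A)
  have IH: "0 < (-1) ^ card {j \<in> A. f j < 0} * (\<Prod>j\<in>A. f j)"
    using insert by simp
  have "{j \<in> insert a A. f j < 0} = (if f a < 0 then insert a {j \<in> A. f j < 0} else {j \<in> A. f j < 0})"
    by auto
  moreover have "a \<notin> {j \<in> A. f j < 0}" "finite {j \<in> A. f j < 0}"
    using insert by auto
  moreover have "f a \<noteq> 0" using insert by simp
  ultimately show ?case
    using IH insert(1,2) by (auto simp: mult_ac intro: mult_pos_pos mult_neg_pos)
qed simp

lemma interlacing_sign_prod:
  assumes "interlacing n r s" "1 \<le> k" "k \<le> Suc n"
  shows "0 < (-1) ^ (k - 1) * (\<Prod>j=1..n. s k - r j)"
proof -
  have s_decr: "decreasing_upto (Suc n) s"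
    using assms(1) by (rule interlacing_decreasing_upto)
  have sr: "s (j + 1) < r j" and rs: "r j < s j" if "1 \<le> j" "j \<le> n" for j
    using assms(1) that unfolding interlacing_def by auto
  have above: "s k < r j" if "j \<in> {1..n}" "j < k" for j
    using decreasing_uptoD[OF s_decr, of "j + 1" k] sr[of j] that assms
    by (cases "j + 1 = k") auto
  have below: "r j < s k" if "j \<in> {1..n}" "k \<le> j" for j
    using decreasing_uptoD[OF s_decr, of k j] rs[of j] that assms
    by (cases "j = k") auto
  have "{j \<in> {1..n}. s k - r j < 0} = {1..<k}"
    using above below assms(3) by fastforce
  moreover have "s k - r j \<noteq> 0" if "j \<in> {1..n}" for j
    using above below that by (cases "j < k") fastforce+
  ultimately show ?thesis
    using prod_sign_count_neg[of "{1..n}" "\<lambda>j. s k - r j"] by simp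
qed

lemma poly_pos_at_top:
  fixes p :: "real poly"
  assumes "0 < lead_coeff p"
  shows "\<exists>x>b. 0 < poly p x"
proof -
  obtain N where N: "\<And>x. N \<le> x \<Longrightarrow> lead_coeff p \<le> poly p x"
    using poly_pinfty_gt_lc[OF assms] by blast
  show ?thesis
    using N[of "max N (b + 1)"] assms by (intro exI[of _ "max N (b + 1)"]) auto
qed

lemma poly_sign_at_bot:
  fixes p :: "real poly"
  assumes "0 < lead_coeff p"
  shows "\<exists>x<b. 0 < (-1) ^ degree p * poly p x"
proof -
  define q where "q = smult ((-1) ^ degree p) (pcompose p [:0, -1:])"
  have "lead_coeff (pcompose p [:0, -1:]) = lead_coeff p * (-1) ^ degree p"
    by (subst lead_coeff_comp) auto
  then have "lead_coeff q = lead_coeff p"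
    by (simp add: q_def degree_pcompose power_mult_distrib[symmetric])
  then obtain y where "- b < y" "0 < poly q y"
    using poly_pos_at_top[of q "- b"] assms by auto
  then show ?thesis
    by (intro exI[of _ "- y"]) (auto simp: q_def poly_pcompose)
qed

lemma poly_eq_smult_prod_roots:
  fixes p :: "real poly"
  assumes "degree p \<le> m" "inj_on t {1..m}" "\<And>j. j \<in> {1..m} \<Longrightarrow> poly p (t j) = 0"
  shows "p = smult (coeff p m) (\<Prod>j=1..m. [:- t j, 1:])"
proof (rule poly_eqI_degree_lead_coeff[where n = m and A = "t ` {1..m}"])
  have deg: "degree (\<Prod>j=1..m. [:- t j, 1:]) = m"
    by (subst degree_prod_eq_sum_degree) auto
  moreover have "lead_coeff (\<Prod>j=1..m. [:- t j, 1:]) = 1"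
    by (simp add: lead_coeff_prod)
  ultimately show "coeff p m = coeff (smult (coeff p m) (\<Prod>j=1..m. [:- t j, 1:])) m"
    by simp
  show "m \<le> card (t ` {1..m})"
    using card_image[OF assms(2)] by simp
  show "degree (smult (coeff p m) (\<Prod>j=1..m. [:- t j, 1:])) \<le> m"
    using deg by (simp add: order.trans[OF degree_smult_le])
  show "poly p z = poly (smult (coeff p m) (\<Prod>j=1..m. [:- t j, 1:])) z"
    if z: "z \<in> t ` {1..m}" for z
  proof -
    obtain j where j: "j \<in> {1..m}" "z = t j"
      using z by blast
    have "(\<Prod>i=1..m. poly [:- t i, 1:] z) = 0"
      by (rule prod_zero) (use j in auto)
    then show ?thesis
      using assms(3)[OF j(1)] j(2) by (simp add: poly_prod)
  qed
qed (use assms in simp)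

lemma alternating_signs_mult_neg:
  fixes x y :: real
  assumes "0 < (-1) ^ Suc k * x" "0 < (-1) ^ k * y"
  shows "x * y < 0"
  using assms by (cases "even k") (auto simp: zero_less_mult_iff mult_less_0_iff)

lemma interlacing_roots_of_alternating_signs:
  fixes Q :: "real poly"
  assumes deg: "degree Q = Suc m" and lc: "0 < lead_coeff Q"
    and s_decr: "decreasing_upto m s"
    and sign: "\<And>k. 1 \<le> k \<Longrightarrow> k \<le> m \<Longrightarrow> 0 < (-1) ^ k * poly Q (s k)"
  shows "\<exists>t. interlacing m s t \<and> Q = smult (lead_coeff Q) (\<Prod>j=1..Suc m. [:- t j, 1:])"
proof -
  obtain b where b: "s 1 < b" "0 < poly Q b"
    using poly_pos_at_top[OF lc] by blast
  obtain a where a: "a < min (s m) b" "0 < (-1) ^ Suc m * poly Q a"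
    using poly_sign_at_bot[OF lc, of "min (s m) b"] deg by auto
  \<comment> \<open>\<open>s\<close> extended by points near \<open>+\<infinity>\<close> and \<open>-\<infinity>\<close>, keeping the sign pattern \<open>(-1)\<^sup>k\<close> of \<open>Q\<close>\<close>
  define u where "u k = (if k = 0 then b else if k = Suc m then a else s k)" for k
  have u_decr: "u (Suc k) < u k" if "k \<le> m" for k
    using a b s_decr that unfolding u_def decreasing_upto_def by auto
  have u_sign: "0 < (-1) ^ k * poly Q (u k)" if "k \<le> Suc m" for k
    using sign a b that unfolding u_def by auto
  have "\<exists>x. u k < x \<and> x < u (k - 1) \<and> poly Q x = 0" if "k \<in> {1..Suc m}" for k
  proof -
    define i where "i = k - 1"
    have k: "k = Suc i" "i \<le> m"
      using that unfolding i_def by auto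
    have "0 < (-1) ^ Suc i * poly Q (u (Suc i))" "0 < (-1) ^ i * poly Q (u i)"
      using u_sign[of "Suc i"] u_sign[of i] k(2) by auto
    then have "poly Q (u (Suc i)) * poly Q (u i) < 0"
      by (rule alternating_signs_mult_neg)
    then show ?thesis
      using poly_IVT[OF u_decr[OF k(2)]] k by auto
  qed
  then obtain t where t: "\<And>k. k \<in> {1..Suc m} \<Longrightarrow> u k < t k \<and> t k < u (k - 1) \<and> poly Q (t k) = 0"
    by metis
  have interl: "interlacing m s t"
    unfolding interlacing_def
  proof (intro allI impI)
    fix j assume "1 \<le> j \<and> j \<le> m"
    then show "t (j + 1) < s j \<and> s j < t j"
      using t[of j] t[of "j + 1"] unfolding u_def by auto
  qed
  have "Q = smult (coeff Q (Suc m)) (\<Prod>j=1..Suc m. [:- t j, 1:])"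
    using decreasing_upto_inj_on[OF interlacing_decreasing_upto(2)[OF interl]] t deg
    by (intro poly_eq_smult_prod_roots) auto
  with interl deg show ?thesis by auto
qed

lemma positive_chain_sequence_pos:
  assumes "positive_chain_sequence d"
  shows "0 < d (n + 2)"
proof -
  obtain g where g1: "g 1 < 1" and g2: "\<forall>n\<ge>2. 0 < g n \<and> g n < 1"
    and dg: "\<forall>n\<ge>1. d (n + 1) = (1 - g n) * g (n + 1)"
    using assms unfolding positive_chain_sequence_def by blast
  have "g (Suc n) < 1" using g1 g2 by (cases n) auto
  moreover have "0 < g (n + 2)" using g2 by simp
  moreover have "d (n + 2) = (1 - g (Suc n)) * g (n + 2)"
    using dg[rule_format, of "Suc n"] by simp
  ultimately show ?thesis by simp
qed

lemma positive_chain_sequence_recurrence_pos: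
  fixes L :: "nat \<Rightarrow> real"
  assumes "positive_chain_sequence d" "L 0 = 1" "L 1 = 1"
    and L_rec: "\<And>n. L (n + 2) = L (n + 1) - d (n + 2) * L n"
  shows "0 < L n"
proof -
  obtain g where g1: "0 \<le> g 1" "g 1 < 1" and g2: "\<forall>n\<ge>2. 0 < g n \<and> g n < 1"
    and dg: "\<forall>n\<ge>1. d (n + 1) = (1 - g n) * g (n + 1)"
    using assms(1) unfolding positive_chain_sequence_def by blast
  have "(1 - g (Suc n)) * L n \<le> L (Suc n) \<and> 0 < L n"
  proof (induction n)
    case 0
    then show ?case using g1 assms(2,3) by simp
  next
    case (Suc n)
    have g_Suc: "g (Suc n) < 1" using g1 g2 by (cases n) auto
    have g_Suc_Suc: "0 < g (n + 2)" "g (n + 2) < 1" using g2 by auto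
    have pos: "0 < L (Suc n)"
      using Suc.IH mult_pos_pos[of "1 - g (Suc n)" "L n"] g_Suc by linarith
    have "d (n + 2) * L n = g (n + 2) * ((1 - g (Suc n)) * L n)"
      using dg[rule_format, of "Suc n"] by simp
    also have "\<dots> \<le> g (n + 2) * L (Suc n)"
      using Suc.IH g_Suc_Suc by (intro mult_left_mono) auto
    finally have "(1 - g (n + 2)) * L (Suc n) \<le> L (n + 2)"
      using L_rec[of n] by (simp add: algebra_simps)
    with pos show ?case by simp
  qed
  then show ?thesis by blast
qed

lemma degree_Pseq_le: "degree (Pseq c d n) \<le> n"
proof (induction c d n rule: Pseq.induct)
  case (3 c d n)
  have "degree ([:- c (n + 2), 1:] * Pseq c d (Suc n)) \<le> n + 2"
    using degree_mult_le[of "[:- c (n + 2), 1:]" "Pseq c d (Suc n)"] 3 by simp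
  moreover have "degree (smult (d (n + 2)) [:1, 0, 1:] * Pseq c d n) \<le> n + 2"
    using degree_mult_le[of "smult (d (n + 2)) [:1, 0, 1:]" "Pseq c d n"]
      degree_smult_le[of "d (n + 2)" "[:1, 0, 1:]"] 3 by simp
  ultimately show ?case
    by (simp add: degree_diff_le)
qed auto

lemma coeff_Pseq_Suc_Suc:
  "coeff (Pseq c d (n + 2)) (n + 2) = coeff (Pseq c d (n + 1)) (n + 1) - d (n + 2) * coeff (Pseq c d n) n"
proof -
  have "coeff (Pseq c d (Suc n)) (n + 2) = 0" "coeff (Pseq c d n) (n + 2) = 0"
    "coeff (Pseq c d n) (n + 1) = 0"
    by (auto intro!: coeff_eq_0 le_less_trans[OF degree_Pseq_le])
  then show ?thesis
    by (simp add: numeral_2_eq_2 mult_pCons_left coeff_pCons)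
qed

lemma poly_Pseq_Suc_Suc_at_root:
  assumes "poly (Pseq c d (n + 1)) x = 0"
  shows "poly (Pseq c d (n + 2)) x = - (d (n + 2) * (x\<^sup>2 + 1)) * poly (Pseq c d n) x"
  using assms by (simp add: numeral_2_eq_2 power2_eq_square algebra_simps)

lemma coeff_Pseq_pos:
  assumes "positive_chain_sequence d"
  shows "0 < coeff (Pseq c d n) n"
  using positive_chain_sequence_recurrence_pos[OF assms, of "\<lambda>n. coeff (Pseq c d n) n"]
    coeff_Pseq_Suc_Suc by simp

lemma degree_Pseq:
  assumes "positive_chain_sequence d"
  shows "degree (Pseq c d n) = n"
  using degree_Pseq_le coeff_Pseq_pos[OF assms] le_degree le_antisym by (metis less_irrefl)

lemma lead_coeff_Pseq_pos:
  assumes "positive_chain_sequence d"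
  shows "0 < lead_coeff (Pseq c d n)"
  using coeff_Pseq_pos[OF assms] degree_Pseq[OF assms] by simp

lemma Pseq_sign_at_interlacing_roots:
  assumes "positive_chain_sequence d"
    and fac_n: "Pseq c d n = smult (lead_coeff (Pseq c d n)) (\<Prod>j=1..n. [:- r j, 1:])"
    and fac_Suc_n: "Pseq c d (Suc n) = smult (lead_coeff (Pseq c d (Suc n))) (\<Prod>j=1..Suc n. [:- s j, 1:])"
    and "interlacing n r s" "1 \<le> k" "k \<le> Suc n"
  shows "0 < (-1) ^ k * poly (Pseq c d (n + 2)) (s k)"
proof -
  have "(\<Prod>j=1..Suc n. poly [:- s j, 1:] (s k)) = 0"
    by (rule prod_zero) (use assms(5,6) in auto)
  then have "poly (Pseq c d (Suc n)) (s k) = 0"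
    by (subst fac_Suc_n) (simp add: poly_prod)
  moreover have "poly (Pseq c d n) (s k) = lead_coeff (Pseq c d n) * (\<Prod>j=1..n. s k - r j)"
    by (subst fac_n) (simp add: poly_prod)
  ultimately have "poly (Pseq c d (n + 2)) (s k)
      = - (d (n + 2) * ((s k)\<^sup>2 + 1)) * (lead_coeff (Pseq c d n) * (\<Prod>j=1..n. s k - r j))"
    using poly_Pseq_Suc_Suc_at_root[of c d n "s k"] by simp
  then have "(-1) ^ k * poly (Pseq c d (n + 2)) (s k)
      = d (n + 2) * ((s k)\<^sup>2 + 1) * lead_coeff (Pseq c d n) * ((-1) ^ (k - 1) * (\<Prod>j=1..n. s k - r j))"
    using assms(5) by (cases k) simp_all
  also have "0 < \<dots>"
  proof (rule mult_pos_pos)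
    show "0 < d (n + 2) * ((s k)\<^sup>2 + 1) * lead_coeff (Pseq c d n)"
      using positive_chain_sequence_pos[OF assms(1)] lead_coeff_Pseq_pos[OF assms(1)]
      by (simp add: add_nonneg_pos)
  qed (rule interlacing_sign_prod[OF assms(4-6)])
  finally show ?thesis .
qed

lemma Pseq_interlacing_factorizations:
  assumes "positive_chain_sequence d"
  shows "\<exists>r s. Pseq c d n = smult (lead_coeff (Pseq c d n)) (\<Prod>j=1..n. [:- r j, 1:])
    \<and> Pseq c d (Suc n) = smult (lead_coeff (Pseq c d (Suc n))) (\<Prod>j=1..Suc n. [:- s j, 1:])
    \<and> interlacing n r s"
proof (induction n)
  case 0
  show ?case
    by (intro exI[of _ "\<lambda>_. 0"] exI[of _ "\<lambda>_. c 1"]) (simp add: interlacing_def)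
next
  case (Suc n)
  then obtain r s where
    fac_n: "Pseq c d n = smult (lead_coeff (Pseq c d n)) (\<Prod>j=1..n. [:- r j, 1:])" and
    fac_Suc_n: "Pseq c d (Suc n) = smult (lead_coeff (Pseq c d (Suc n))) (\<Prod>j=1..Suc n. [:- s j, 1:])" and
    interl: "interlacing n r s"
    by blast
  have "\<exists>t. interlacing (Suc n) s t \<and>
      Pseq c d (n + 2) = smult (lead_coeff (Pseq c d (n + 2))) (\<Prod>j=1..Suc (Suc n). [:- t j, 1:])"
    using degree_Pseq[OF assms, of c "n + 2"] lead_coeff_Pseq_pos[OF assms, of c "n + 2"]
      interlacing_decreasing_upto(2)[OF interl]
      Pseq_sign_at_interlacing_roots[OF assms fac_n fac_Suc_n interl]
    by (intro interlacing_roots_of_alternating_signs) auto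
  with fac_Suc_n show ?case
    by (auto simp: numeral_2_eq_2)
qed

text \<open>Meaningful for \<open>1 \<le> j \<le>\<close> the number of distinct real zeros of \<open>p\<close>; otherwise unspecified.\<close>
definition nth_largest_root :: "real poly \<Rightarrow> nat \<Rightarrow> real" where
  "nth_largest_root p j = (THE x. poly p x = 0 \<and> card {y. poly p y = 0 \<and> x < y} = j - 1)"

lemma nth_largest_root_eq:
  assumes fac: "p = smult L (\<Prod>j=1..n. [:- r j, 1:])" and "L \<noteq> 0"
    and r_decr: "decreasing_upto n r" and j: "1 \<le> j" "j \<le> n"
  shows "nth_largest_root p j = r j"
proof -
  have roots: "poly p x = 0 \<longleftrightarrow> x \<in> r ` {1..n}" for x
    using \<open>L \<noteq> 0\<close> by (auto simp: fac poly_prod)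
  have above: "{y. poly p y = 0 \<and> r i < y} = r ` {1..<i}" if i: "1 \<le> i" "i \<le> n" for i
  proof
    show "{y. poly p y = 0 \<and> r i < y} \<subseteq> r ` {1..<i}"
    proof
      fix y assume "y \<in> {y. poly p y = 0 \<and> r i < y}"
      then obtain m where m: "m \<in> {1..n}" "y = r m" "r i < r m"
        using roots by auto
      have "m < i"
      proof (rule ccontr)
        assume "\<not> m < i"
        then consider "m = i" | "i < m" by linarith
        then show False
          using decreasing_uptoD[OF r_decr, of i m] m i by cases auto
      qed
      with m show "y \<in> r ` {1..<i}" by auto
    qed
    show "r ` {1..<i} \<subseteq> {y. poly p y = 0 \<and> r i < y}"
      using decreasing_uptoD[OF r_decr, of _ i] roots i by auto
  qed
  have count: "card {y. poly p y = 0 \<and> r i < y} = i - 1" if "1 \<le> i" "i \<le> n" for i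
  proof -
    have "inj_on r {1..<i}"
      by (rule inj_on_subset[OF decreasing_upto_inj_on[OF r_decr]]) (use that in auto)
    then show ?thesis
      using above[OF that] by (simp add: card_image)
  qed
  show ?thesis
    unfolding nth_largest_root_def
  proof (rule the_equality)
    show "poly p (r j) = 0 \<and> card {y. poly p y = 0 \<and> r j < y} = j - 1"
      using roots count j by auto
  next
    fix x assume x: "poly p x = 0 \<and> card {y. poly p y = 0 \<and> x < y} = j - 1"
    then obtain i where i: "i \<in> {1..n}" "x = r i"
      using roots by auto
    with x count[of i] have "i - 1 = j - 1"
      by auto
    with i j have "i = j"
      by auto
    with i show "x = r j"
      by simp
  qed
qed

lemma Pseq_nth_largest_roots:
  fixes c d :: "nat \<Rightarrow> real"
  assumes "positive_chain_sequence d"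
  defines "X \<equiv> \<lambda>n. nth_largest_root (Pseq c d n)"
  shows "Pseq c d n = smult (lead_coeff (Pseq c d n)) (\<Prod>j=1..n. [:- X n j, 1:])"
    and "interlacing n (X n) (X (Suc n))"
proof -
  obtain r s where
    fac_n: "Pseq c d n = smult (lead_coeff (Pseq c d n)) (\<Prod>j=1..n. [:- r j, 1:])" and
    fac_Suc_n: "Pseq c d (Suc n) = smult (lead_coeff (Pseq c d (Suc n))) (\<Prod>j=1..Suc n. [:- s j, 1:])" and
    interl: "interlacing n r s"
    using Pseq_interlacing_factorizations[OF assms(1)] by blast
  have lc: "lead_coeff (Pseq c d m) \<noteq> 0" for m
    using lead_coeff_Pseq_pos[OF assms(1), of c m] by (metis less_irrefl)
  have r: "X n j = r j" if "1 \<le> j" "j \<le> n" for j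
    unfolding X_def by (rule nth_largest_root_eq[OF fac_n lc interlacing_decreasing_upto(1)[OF interl] that])
  have s: "X (Suc n) j = s j" if "1 \<le> j" "j \<le> Suc n" for j
    unfolding X_def by (rule nth_largest_root_eq[OF fac_Suc_n lc interlacing_decreasing_upto(2)[OF interl] that])
  have "(\<Prod>j=1..n. [:- X n j, 1:]) = (\<Prod>j=1..n. [:- r j, 1:])"
    by (rule prod.cong) (auto simp: r)
  with fac_n show "Pseq c d n = smult (lead_coeff (Pseq c d n)) (\<Prod>j=1..n. [:- X n j, 1:])"
    by simp
  show "interlacing n (X n) (X (Suc n))"
    using interl r s by (simp add: interlacing_def)
qed

theorem theorem2p2:
  fixes c d :: "nat \<Rightarrow> real"
  assumes "positive_chain_sequence d"
  shows "\<exists>X :: nat \<Rightarrow> nat \<Rightarrow> real. \<forall>n\<ge>1.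
           lead_coeff (Pseq c d n) \<noteq> 0 \<and>
           Pseq c d n = smult (lead_coeff (Pseq c d n)) (\<Prod>j = 1..n. [:- X n j, 1:]) \<and>
           (\<forall>j. 1 \<le> j \<and> j < n \<longrightarrow> X n (j + 1) < X n j) \<and>
           (\<forall>j. 1 \<le> j \<and> j \<le> n \<longrightarrow>
              X (n + 1) (j + 1) < X n j \<and> X n j < X (n + 1) j)"
proof -
  define X where "X n = nth_largest_root (Pseq c d n)" for n
  have "lead_coeff (Pseq c d n) \<noteq> 0 \<and>
      Pseq c d n = smult (lead_coeff (Pseq c d n)) (\<Prod>j=1..n. [:- X n j, 1:]) \<and>
      decreasing_upto n (X n) \<and> interlacing n (X n) (X (Suc n))" for n
    using lead_coeff_Pseq_pos[OF assms, of c n]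
      Pseq_nth_largest_roots[OF assms, where c = c and n = n]
      interlacing_decreasing_upto(1)
    unfolding X_def by (metis less_irrefl)
  then show ?thesis
    unfolding decreasing_upto_def interlacing_def by (intro exI[of _ X]) simp
qed

end
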